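(* Consider the scheme with the classical entropy $f(\rho)=\rho(\ln\rho-1)$. Let $\rho^{n-1},\rho^n,\phi^n\in\mathcal C$ with $\min_{i,j,k}\rho^n_{i,j,k}>0$. Then there exists a unique pair $(\rho^{n+1},\phi^{n+1})\in\mathcal C\times\mathcal C$ with $\rho^{n+1}_{i,j,k}>0$ for all $i,j,k=1,\dots,N$ solving the scheme.
   Context: Grid setting: $\Omega=(a,b)^3$, $N\in\mathbb N$, $h=(b-a)/N$, cell centers $(x_i,y_j,z_k)=(a+(i-\tfrac12)h,a+(j-\tfrac12)h,a+(k-\tfrac12)h)$, $1\le i,j,k\le N$. $\mathcal C$ is the space of cell-centered grid functions $u_{i,j,k}$, extended to ghost points by the discrete homogeneous Neumann condition $u_{0,j,k}=u_{1,j,k}$, $u_{N+1,j,k}=u_{N,j,k}$ (and likewise in $j$ and $k$). Operators: $D_xf_{i+1/2,j,k}=(f_{i+1,j,k}-f_{i,j,k})/h$, $A_xf_{i+1/2,j,k}=(f_{i+1,j,k}+f_{i,j,k})/2$; for face-centered $g$, $d_xg_{i,j,k}=(g_{i+1/2,j,k}-g_{i-1/2,j,k})/h$; analogously in $y,z$. $\nabla_hf=(D_xf,D_yf,D_zf)$, $\Delta_hf=d_xD_xf+d_yD_yf+d_zD_zf$, and for cell-centered $\mathcal D$, $\nabla_h\cdot(\mathcal D\nabla_hf):=d_x(A_x\mathcal D\,D_xf)+d_y(A_y\mathcal D\,D_yf)+d_z(A_z\mathcal D\,D_zf)$. Scheme (classical case: $f'(\rho)=\ln\rho$, $1/f''(\rho)=\rho$,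 $f'''(\rho)=-1/\rho^2$): parameters $\gamma,\mu,\alpha,\chi,\theta>0$, $\Delta t>0$. With $\hat\rho^{n+\frac12}=\big((\tfrac32\rho^n-\tfrac12\rho^{n-1})^2+\Delta t^8\big)^{1/2}$ pointwise, find $\rho^{n+1},\phi^{n+1}\in\mathcal C$ with $$\frac{\rho^{n+1}-\rho^n}{\Delta t}=\nabla_h\cdot\Big[\hat\rho^{n+\frac12}\nabla_h\Big(\gamma S^{n+\frac12}-\frac\chi2(\phi^{n+1}+\phi^n)+\frac{\chi^2\Delta t}{4\theta}(\rho^{n+1}-\rho^n)\Big)\Big],$$ $$\theta\frac{\phi^{n+1}-\phi^n}{\Delta t}=\frac\mu2\Delta_h(\phi^{n+1}+\phi^n)-\frac\alpha2(\phi^{n+1}+\phi^n)+\frac\chi2(\rho^{n+1}+\rho^n),$$ where $S^{n+\frac12}=\ln\rho^{n+1}-\frac{\rho^{n+1}-\rho^n}{2\rho^{n+1}}-\frac{(\rho^{n+1}-\rho^n)^2}{6(\rho^{n+1})^2}$ pointwise. *)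

theory Defs
  imports Complex_Main
begin

text \<open>Cell-centred grid functions on an N x N x N grid are functions on integer
  index triples; the cells are the triples in {1..N}^3. The space C is the set of
  such functions that vanish off the cells (so a grid function is determined by its
  cell values). Ghost values are obtained by the discrete homogeneous Neumann
  extension, i.e. clamping the indices to {1..N}.\<close>

type_synonym idx = "int \<times> int \<times> int"

definition cells :: "nat \<Rightarrow> idx set" where
  "cells N = {1..int N} \<times> {1..int N} \<times> {1..int N}"

definition gridC :: "nat \<Rightarrow> (idx \<Rightarrow> real) set" where
  "gridC N = {u. \<forall>p. p \<notin> cells N \<longrightarrow> u p = 0}"

definition clamp :: "nat \<Rightarrow> int \<Rightarrow> int" where
  "clamp N i = max 1 (min (int N) i)"

definition ext :: "nat \<Rightarrow> (idx \<Rightarrow> real) \<Rightarrow> idx \<Rightarrow> real" where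
  "ext N u p = (case p of (i, j, k) \<Rightarrow> u (clamp N i, clamp N j, clamp N k))"

definition padd :: "idx \<Rightarrow> idx \<Rightarrow> idx" where
  "padd p q = (case p of (i, j, k) \<Rightarrow> case q of (i', j', k') \<Rightarrow> (i + i', j + j', k + k'))"

definition psub :: "idx \<Rightarrow> idx \<Rightarrow> idx" where
  "psub p q = (case p of (i, j, k) \<Rightarrow> case q of (i', j', k') \<Rightarrow> (i - i', j - j', k - k'))"

definition dirs :: "idx list" where
  "dirs = [(1, 0, 0), (0, 1, 0), (0, 0, 1)]"

text \<open>Face-centred values are indexed by the lower adjacent cell:
  the value at the face p + e/2 is stored at index p.\<close>

definition Dface :: "real \<Rightarrow> nat \<Rightarrow> idx \<Rightarrow> (idx \<Rightarrow> real) \<Rightarrow> idx \<Rightarrow> real" where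
  "Dface h N e f p = (ext N f (padd p e) - ext N f p) / h"

definition Aface :: "nat \<Rightarrow> idx \<Rightarrow> (idx \<Rightarrow> real) \<Rightarrow> idx \<Rightarrow> real" where
  "Aface N e f p = (ext N f (padd p e) + ext N f p) / 2"

definition dcell :: "real \<Rightarrow> idx \<Rightarrow> (idx \<Rightarrow> real) \<Rightarrow> idx \<Rightarrow> real" where
  "dcell h e g p = (g p - g (psub p e)) / h"

definition lap_h :: "real \<Rightarrow> nat \<Rightarrow> (idx \<Rightarrow> real) \<Rightarrow> idx \<Rightarrow> real" where
  "lap_h h N f p = (\<Sum>e\<leftarrow>dirs. dcell h e (Dface h N e f) p)"

definition divgrad_h :: "real \<Rightarrow> nat \<Rightarrow> (idx \<Rightarrow> real) \<Rightarrow> (idx \<Rightarrow> real) \<Rightarrow> idx \<Rightarrow> real" where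
  "divgrad_h h N D f p = (\<Sum>e\<leftarrow>dirs. dcell h e (\<lambda>q. Aface N e D q * Dface h N e f q) p)"

definition scheme ::
  "real \<Rightarrow> real \<Rightarrow> nat \<Rightarrow> real \<Rightarrow> real \<Rightarrow> real \<Rightarrow> real \<Rightarrow> real \<Rightarrow> real \<Rightarrow>
   (idx \<Rightarrow> real) \<Rightarrow> (idx \<Rightarrow> real) \<Rightarrow> (idx \<Rightarrow> real) \<Rightarrow>
   (idx \<Rightarrow> real) \<Rightarrow> (idx \<Rightarrow> real) \<Rightarrow> bool" where
  "scheme a b N \<gamma> \<mu> \<alpha> \<chi> \<theta> dt rho_old rho phi rho_new phi_new \<longleftrightarrow>
     (let h = (b - a) / real N;
          rhat = (\<lambda>p. sqrt (((3/2) * rho p - (1/2) * rho_old p)\<^sup>2 + dt ^ 8));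
          S = (\<lambda>p. ln (rho_new p) - (rho_new p - rho p) / (2 * rho_new p)
                    - (rho_new p - rho p)\<^sup>2 / (6 * (rho_new p)\<^sup>2));
          W = (\<lambda>p. \<gamma> * S p - \<chi> / 2 * (phi_new p + phi p)
                    + \<chi>\<^sup>2 * dt / (4 * \<theta>) * (rho_new p - rho p));
          phisum = (\<lambda>p. phi_new p + phi p)
      in \<forall>p \<in> cells N.
           (rho_new p - rho p) / dt = divgrad_h h N rhat W p \<and>
           \<theta> * (phi_new p - phi p) / dt
             = \<mu> / 2 * lap_h h N phisum p - \<alpha> / 2 * phisum p
               + \<chi> / 2 * (rho_new p + rho p))"

end

theory Submission
  imports Defs "HOL-Analysis.Function_Topology"
begin

text \<open>
  Uniqueness is a monotonicity argument: for two positive solutions, summing the difference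
  of the density equations against the difference of the potentials
  \<open>W = \<gamma> S - \<chi>/2 (\<phi>\<^sup>n\<^sup>+\<^sup>1 + \<phi>\<^sup>n) + \<chi>\<^sup>2\<Delta>t/(4\<theta>) (\<rho>\<^sup>n\<^sup>+\<^sup>1 - \<rho>\<^sup>n)\<close> gives, after summation by parts,
  a nonpositive number; eliminating the \<open>\<phi>\<close>-equation rewrites it as
  \<open>\<gamma> \<Sigma> (S\<^sub>1 - S\<^sub>2)(\<rho>\<^sub>1 - \<rho>\<^sub>2)\<close> plus nonnegative terms, and \<open>S\<close> is strictly increasing in \<open>\<rho>\<^sup>n\<^sup>+\<^sup>1\<close>.

  Existence is variational. Writing \<open>\<rho>\<^sup>n\<^sup>+\<^sup>1 = \<rho>\<^sup>n + \<Delta>t \<nabla>\<^sub>h\<cdot>F\<close> for a flux \<open>F\<close> on the interior faces,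
  the scheme is the Euler--Lagrange system of the energy
  \<open>\<Sigma> \<Delta>t F\<^sup>2/(2 A\<hat>\<rho>) + \<Sigma> P(\<rho>\<^sup>n\<^sup>+\<^sup>1, \<phi>\<^sup>n\<^sup>+\<^sup>1) + \<mu>/4 |\<nabla>\<^sub>h\<phi>\<^sup>n\<^sup>+\<^sup>1|\<^sup>2\<close> in \<open>(F, \<phi>\<^sup>n\<^sup>+\<^sup>1)\<close>, where \<open>P\<close>
  contains an antiderivative of \<open>\<gamma> S\<close>. That antiderivative behaves like \<open>(\<rho>\<^sup>n)\<^sup>2/(6\<rho>\<^sup>n\<^sup>+\<^sup>1)\<close> as
  \<open>\<rho>\<^sup>n\<^sup>+\<^sup>1 \<rightarrow> 0\<close>, so sublevel sets are compact and stay away from \<open>\<rho>\<^sup>n\<^sup>+\<^sup>1 = 0\<close>; a minimiser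
  therefore exists, is positive, and is a critical point.
\<close>

section \<open>Discrete calculus on the grid\<close>

definition inner_faces :: "nat \<Rightarrow> idx \<Rightarrow> idx set" where
  "inner_faces N e = {q \<in> cells N. padd q e \<in> cells N}"

text \<open>A flux \<open>G q e\<close> lives on the face between \<open>q\<close> and \<open>q + e\<close>; fluxes through boundary faces are
  dropped, which is what the Neumann extension produces.\<close>

definition masked_flux :: "nat \<Rightarrow> (idx \<Rightarrow> idx \<Rightarrow> real) \<Rightarrow> idx \<Rightarrow> idx \<Rightarrow> real" where
  "masked_flux N G e q = (if q \<in> inner_faces N e then G q e else 0)"

definition div_flux :: "real \<Rightarrow> nat \<Rightarrow> (idx \<Rightarrow> idx \<Rightarrow> real) \<Rightarrow> idx \<Rightarrow> real" where
  "div_flux h N G p = (\<Sum>e\<in>set dirs. (masked_flux N G e p - masked_flux N G e (psub p e)) / h)"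

definition diff_quot :: "real \<Rightarrow> (idx \<Rightarrow> real) \<Rightarrow> idx \<Rightarrow> idx \<Rightarrow> real" where
  "diff_quot h u q e = (u (padd q e) - u q) / h"

lemma set_dirs: "set dirs = {(1,0,0), (0,1,0), (0,0,1)}"
  by (simp add: dirs_def)

lemma sum_list_dirs: "(\<Sum>e\<leftarrow>dirs. f e) = (\<Sum>e\<in>set dirs. f e)"
  by (rule sum_list_distinct_conv_sum_set) (simp add: dirs_def)

lemma finite_cells [simp]: "finite (cells N)"
  by (simp add: cells_def)

lemma finite_inner_faces [simp]: "finite (inner_faces N e)"
  by (simp add: inner_faces_def)

lemma cells_nonempty: "N \<ge> 1 \<Longrightarrow> cells N \<noteq> {}"
  by (auto simp: cells_def)

lemma padd_psub [simp]: "padd (psub p e) e = p"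
  and psub_padd [simp]: "psub (padd p e) e = p"
  by (auto simp: padd_def psub_def split: prod.splits)

lemma ext_cell: "p \<in> cells N \<Longrightarrow> ext N u p = u p"
  by (auto simp: ext_def cells_def clamp_def split: prod.splits)

lemma ext_padd_outside:
  "p \<in> cells N \<Longrightarrow> e \<in> set dirs \<Longrightarrow> padd p e \<notin> cells N \<Longrightarrow> ext N u (padd p e) = u p"
  by (auto simp: set_dirs ext_def cells_def clamp_def padd_def split: prod.splits
      intro!: arg_cong[where f=u])

lemma ext_psub_outside:
  "p \<in> cells N \<Longrightarrow> e \<in> set dirs \<Longrightarrow> psub p e \<notin> cells N \<Longrightarrow> ext N u (psub p e) = u p"
  by (auto simp: set_dirs ext_def cells_def clamp_def psub_def split: prod.splits
      intro!: arg_cong[where f=u])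

lemma divgrad_h_eq_div_flux:
  assumes p: "p \<in> cells N"
  shows "divgrad_h h N D f p = div_flux h N (\<lambda>q e. Aface N e D q * diff_quot h f q e) p"
  unfolding divgrad_h_def div_flux_def sum_list_dirs
proof (rule sum.cong[OF refl])
  fix e assume e: "e \<in> set dirs"
  let ?g = "\<lambda>q. Aface N e D q * Dface h N e f q"
  let ?G = "\<lambda>q e. Aface N e D q * diff_quot h f q e"
  have "?g p = masked_flux N ?G e p"
    using p e by (cases "padd p e \<in> cells N")
      (simp_all add: masked_flux_def Dface_def diff_quot_def ext_padd_outside ext_cell inner_faces_def)
  moreover have "?g (psub p e) = masked_flux N ?G e (psub p e)"
    using p e by (cases "psub p e \<in> cells N")
      (simp_all add: masked_flux_def Dface_def diff_quot_def ext_psub_outside ext_cell inner_faces_def)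
  ultimately show "dcell h e ?g p = (masked_flux N ?G e p - masked_flux N ?G e (psub p e)) / h"
    unfolding dcell_def by simp
qed

lemma lap_h_eq_div_flux: "p \<in> cells N \<Longrightarrow> lap_h h N f p = div_flux h N (diff_quot h f) p"
  using divgrad_h_eq_div_flux[of p N h "\<lambda>_. 1" f]
  by (simp add: lap_h_def divgrad_h_def Aface_def ext_def split: prod.splits)

lemma summation_by_parts_dir:
  "(\<Sum>p\<in>cells N. w p * (masked_flux N G e p - masked_flux N G e (psub p e)))
     = - (\<Sum>q\<in>inner_faces N e. (w (padd q e) - w q) * G q e)"
proof -
  have out: "(\<Sum>p\<in>cells N. w p * masked_flux N G e p) = (\<Sum>q\<in>inner_faces N e. w q * G q e)"
    unfolding masked_flux_def inner_faces_def by (simp add: sum.inter_filter if_distrib cong: if_cong)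
  have shift: "{p \<in> cells N. psub p e \<in> inner_faces N e} = (\<lambda>q. padd q e) ` inner_faces N e"
    by (auto simp: inner_faces_def intro: rev_image_eqI[of "psub _ e"])
  have inj: "inj_on (\<lambda>q. padd q e) (inner_faces N e)"
    by (metis inj_onI psub_padd)
  have "(\<Sum>p\<in>cells N. w p * masked_flux N G e (psub p e))
      = (\<Sum>p\<in>{p \<in> cells N. psub p e \<in> inner_faces N e}. w p * G (psub p e) e)"
    unfolding masked_flux_def by (simp add: sum.inter_filter if_distrib cong: if_cong)
  also have "\<dots> = (\<Sum>q\<in>inner_faces N e. w (padd q e) * G q e)"
    unfolding shift by (simp add: sum.reindex[OF inj])
  finally show ?thesis
    using out by (simp add: right_diff_distrib sum_subtractf left_diff_distrib)
qed

lemma summation_by_parts: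
  "(\<Sum>p\<in>cells N. w p * div_flux h N G p)
     = - (\<Sum>e\<in>set dirs. \<Sum>q\<in>inner_faces N e. (w (padd q e) - w q) * G q e) / h"
proof -
  have "(\<Sum>p\<in>cells N. w p * div_flux h N G p)
      = (\<Sum>e\<in>set dirs. (\<Sum>p\<in>cells N. w p * (masked_flux N G e p - masked_flux N G e (psub p e))) / h)"
    unfolding div_flux_def
    by (simp add: sum_distrib_left sum_divide_distrib sum.swap[of _ "cells N"] mult.assoc)
  then show ?thesis
    by (simp add: summation_by_parts_dir sum_negf sum_divide_distrib)
qed

lemma div_flux_cong:
  assumes "\<And>e q. e \<in> set dirs \<Longrightarrow> q \<in> inner_faces N e \<Longrightarrow> G q e = H q e"
  shows "div_flux h N G p = div_flux h N H p"
  unfolding div_flux_def masked_flux_def using assms by (intro sum.cong) auto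

lemma div_flux_add_scaled:
  "div_flux h N (\<lambda>q e. G q e + t * H q e) p = div_flux h N G p + t * div_flux h N H p"
  unfolding div_flux_def masked_flux_def sum_distrib_left sum.distrib[symmetric]
  by (intro sum.cong) (auto simp: algebra_simps diff_divide_distrib add_divide_distrib)

lemma div_flux_diff:
  "div_flux h N (\<lambda>q e. G q e - H q e) p = div_flux h N G p - div_flux h N H p"
  unfolding div_flux_def masked_flux_def sum_subtractf[symmetric]
  by (intro sum.cong) (auto simp: algebra_simps diff_divide_distrib)

lemma div_flux_zero: "div_flux h N (\<lambda>q e. 0) p = 0"
  by (simp add: div_flux_def masked_flux_def)

lemma div_flux_diff_quot_diff:
  "div_flux h N (diff_quot h (\<lambda>p. u p - v p)) p
     = div_flux h N (diff_quot h u) p - div_flux h N (diff_quot h v) p"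
proof -
  have "diff_quot h (\<lambda>p. u p - v p) = (\<lambda>q e. diff_quot h u q e - diff_quot h v q e)"
    by (auto simp: diff_quot_def fun_eq_iff diff_divide_distrib)
  then show ?thesis by (simp add: div_flux_diff)
qed

lemma gridC_eqI:
  assumes "u \<in> gridC N" "v \<in> gridC N" "\<And>p. p \<in> cells N \<Longrightarrow> u p = v p"
  shows "u = v"
proof
  fix p show "u p = v p"
  proof (cases "p \<in> cells N")
    case False
    then have "u p = 0" "v p = 0" using assms(1,2) unfolding gridC_def by blast+
    then show ?thesis by simp
  qed (rule assms(3))
qed

lemma member_le_sum_sum:
  fixes f :: "'a \<Rightarrow> 'b \<Rightarrow> 'c::ordered_comm_monoid_add"
  assumes "finite A" "\<And>a. finite (B a)" "a0 \<in> A" "b0 \<in> B a0" "\<And>a b. f a b \<ge> 0"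
  shows "f a0 b0 \<le> (\<Sum>a\<in>A. \<Sum>b\<in>B a. f a b)"
proof -
  have "f a0 b0 \<le> (\<Sum>b\<in>B a0. f a0 b)"
    using assms by (intro sum_nonneg_leq_bound[OF _ _ refl]) auto
  also have "\<dots> \<le> (\<Sum>a\<in>A. \<Sum>b\<in>B a. f a b)"
    using assms by (intro sum_nonneg_leq_bound[OF _ _ refl]) (auto intro: sum_nonneg)
  finally show ?thesis .
qed

lemma continuous_on_coordinate [continuous_intros]:
  "continuous_on S (\<lambda>z::'a \<Rightarrow> real. z i)"
  by (rule continuous_on_subset[OF continuous_on_product_coordinates]) simp

lemma continuous_on_masked_flux [continuous_intros]:
  "continuous_on S (\<lambda>z::idx \<times> idx \<Rightarrow> real. masked_flux N (\<lambda>q e. z (q, e)) e q)"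
  by (cases "q \<in> inner_faces N e") (simp_all add: masked_flux_def continuous_on_coordinate)

section \<open>The discrete chemical potential \<open>S\<close>\<close>

definition S_half :: "real \<Rightarrow> real \<Rightarrow> real" where
  "S_half r x = ln x - (x - r) / (2 * x) - (x - r)\<^sup>2 / (6 * x\<^sup>2)"

definition S_half_expanded :: "real \<Rightarrow> real \<Rightarrow> real" where
  "S_half_expanded r x = ln x - 2/3 + 5*r / (6*x) - r\<^sup>2 / (6*x\<^sup>2)"

definition G_half :: "real \<Rightarrow> real \<Rightarrow> real" where
  "G_half r x = x * ln x - 5*x/3 + 5*r/6 * ln x + r\<^sup>2 / (6*x)"

lemma S_half_eq_expanded: "x > 0 \<Longrightarrow> S_half r x = S_half_expanded r x"
  unfolding S_half_def S_half_expanded_def by (simp add: field_simps power2_eq_square)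

lemma G_half_has_derivative: "x > 0 \<Longrightarrow> (G_half r has_real_derivative S_half r x) (at x)"
  unfolding G_half_def S_half_eq_expanded S_half_expanded_def
  by (rule derivative_eq_intros refl | simp)+ (simp add: field_simps power2_eq_square)

lemma S_half_expanded_has_derivative:
  "x > 0 \<Longrightarrow> (S_half_expanded r has_real_derivative (x\<^sup>2 - 5/6*r*x + r\<^sup>2/3) / x^3) (at x)"
  unfolding S_half_expanded_def
  by (rule derivative_eq_intros refl | simp)+
     (simp add: field_simps power2_eq_square power3_eq_cube power4_eq_xxxx)

lemma S_half_numerator_pos:
  assumes "(x::real) > 0" shows "x\<^sup>2 - 5/6*r*x + r\<^sup>2/3 > 0"
proof -
  have "x\<^sup>2 - 5/6*r*x + r\<^sup>2/3 = (x - 5/12*r)\<^sup>2 + 23/144*r\<^sup>2"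
    by (simp add: power2_eq_square algebra_simps)
  also have "\<dots> > 0"
    using assms by (cases "r = 0") (simp_all add: add_nonneg_pos)
  finally show ?thesis .
qed

lemma S_half_strict_mono:
  assumes "0 < x1" "x1 < x2" shows "S_half r x1 < S_half r x2"
proof -
  have "S_half_expanded r x1 < S_half_expanded r x2"
    using assms
    by (intro DERIV_pos_imp_increasing[where f="S_half_expanded r"])
       (auto intro!: exI S_half_expanded_has_derivative S_half_numerator_pos divide_pos_pos)
  then show ?thesis using assms by (simp add: S_half_eq_expanded)
qed

lemma S_half_monotone:
  assumes "x1 > 0" "x2 > 0"
  shows "(S_half r x1 - S_half r x2) * (x1 - x2) \<ge> 0"
    and "(S_half r x1 - S_half r x2) * (x1 - x2) = 0 \<Longrightarrow> x1 = x2"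
  using assms S_half_strict_mono[of x1 x2 r] S_half_strict_mono[of x2 x1 r]
  by (cases x1 x2 rule: linorder_cases; auto intro: mult_nonpos_nonpos)+

lemma xlnx_lower_bound:
  assumes x: "(x::real) > 0" shows "x * ln x - B * x \<ge> - exp B"
proof -
  define u where "u = x / exp B"
  have u: "u > 0" and xu: "x = exp B * u" using x by (simp_all add: u_def)
  have "ln (1/u) \<le> 1/u - 1" using u by (intro ln_le_minus_one) simp
  then have "u * ln u \<ge> -1" using u by (simp add: ln_div field_simps)
  then have "exp B * (u * ln u) \<ge> - exp B" using mult_left_mono[of "-1" "u * ln u" "exp B"] by simp
  moreover have "x * ln x - B * x = exp B * (u * ln u)"
    using u by (simp add: xu ln_mult algebra_simps)
  ultimately show ?thesis by simp
qed

lemma ln_plus_inverse_lower_bound: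
  assumes x: "(x::real) > 0" and r: "r > 0"
  shows "5*r/6 * ln x + r\<^sup>2/(6*x) \<ge> 5*r/6 * (ln (r/10) + 1) + r\<^sup>2/(12*x)"
proof -
  have "ln ((r/10)/x) \<le> (r/10)/x - 1" using x r by (intro ln_le_minus_one) simp
  then have "ln x \<ge> ln (r/10) + 1 - r/(10*x)" using x r by (simp add: ln_div ln_mult)
  then have "5*r/6 * ln x \<ge> 5*r/6 * (ln (r/10) + 1 - r/(10*x))" using r by (simp add: mult_left_mono)
  moreover have "5*r/6 * (ln (r/10) + 1 - r/(10*x)) = 5*r/6 * (ln (r/10) + 1) - r\<^sup>2/(12*x)"
    and "r\<^sup>2/(6*x) = r\<^sup>2/(12*x) + r\<^sup>2/(12*x)"
    using x by (simp_all add: field_simps power2_eq_square)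
  ultimately show ?thesis by linarith
qed

lemma quadratic_lower_bound:
  assumes "(a::real) > 0" shows "a/4 * y\<^sup>2 - g * y \<ge> a/8 * y\<^sup>2 - 2 * g\<^sup>2 / a"
proof -
  have "a/8 * y\<^sup>2 - g * y + 2 * g\<^sup>2 / a = a/8 * (y - 4*g/a)\<^sup>2"
    using assms by (simp add: field_simps power2_eq_square)
  also have "\<dots> \<ge> 0" using assms by simp
  finally show ?thesis by simp
qed

lemma continuous_on_G_half:
  fixes f :: "'a::topological_space \<Rightarrow> real"
  assumes f: "continuous_on S f" and pos: "\<forall>z\<in>S. f z > 0"
  shows "continuous_on S (\<lambda>z. G_half r (f z))"
proof -
  have "continuous_on S (\<lambda>z. ln (f z))" using pos by (intro continuous_on_ln f) auto
  moreover have "continuous_on S (\<lambda>z. r\<^sup>2 / (6 * f z))"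
    using pos by (intro continuous_on_divide continuous_on_const continuous_on_mult f) auto
  ultimately show ?thesis
    unfolding G_half_def using pos
    by (intro continuous_on_add continuous_on_diff continuous_on_mult continuous_on_const
        continuous_on_divide f) auto
qed

section \<open>The scheme on the interior faces\<close>

locale scheme_step =
  fixes N :: nat and h dt \<gamma> \<mu> \<alpha> \<chi> \<theta> :: real and rho_old rho phi :: "idx \<Rightarrow> real"
  assumes N_pos: "N \<ge> 1" and h_pos: "h > 0" and dt_pos: "dt > 0"
    and gamma_pos: "\<gamma> > 0" and mu_pos: "\<mu> > 0" and alpha_pos: "\<alpha> > 0"
    and chi_pos: "\<chi> > 0" and theta_pos: "\<theta> > 0"
    and rho_pos: "\<forall>p \<in> cells N. rho p > 0"
begin

definition rhat :: "idx \<Rightarrow> real" where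
  "rhat = (\<lambda>p. sqrt (((3/2) * rho p - (1/2) * rho_old p)\<^sup>2 + dt ^ 8))"

definition mobility :: "idx \<Rightarrow> idx \<Rightarrow> real" where
  "mobility e q = Aface N e rhat q"

definition c_stab :: real where
  "c_stab = \<chi>\<^sup>2 * dt / (4 * \<theta>)"

definition potential :: "(idx \<Rightarrow> real) \<Rightarrow> (idx \<Rightarrow> real) \<Rightarrow> idx \<Rightarrow> real" where
  "potential rn fn p = \<gamma> * S_half (rho p) (rn p) - \<chi> / 2 * (fn p + phi p) + c_stab * (rn p - rho p)"

definition mobility_flux :: "(idx \<Rightarrow> real) \<Rightarrow> idx \<Rightarrow> idx \<Rightarrow> real" where
  "mobility_flux W q e = mobility e q * diff_quot h W q e"

definition scheme_eqs :: "(idx \<Rightarrow> real) \<Rightarrow> (idx \<Rightarrow> real) \<Rightarrow> bool" where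
  "scheme_eqs rn fn \<longleftrightarrow> (\<forall>p \<in> cells N.
     (rn p - rho p) / dt = div_flux h N (mobility_flux (potential rn fn)) p \<and>
     \<theta> * (fn p - phi p) / dt = \<mu> / 2 * (div_flux h N (diff_quot h fn) p + lap_h h N phi p)
        - \<alpha> / 2 * (fn p + phi p) + \<chi> / 2 * (rn p + rho p))"

lemma rhat_pos: "rhat p > 0"
  unfolding rhat_def using dt_pos by (intro real_sqrt_gt_zero add_nonneg_pos) auto

lemma mobility_pos: "mobility e q > 0"
  using rhat_pos by (simp add: mobility_def Aface_def ext_def add_pos_pos split: prod.splits)

lemma c_stab_eq: "c_stab = \<chi>\<^sup>2 / (4 * (\<theta> / dt))"
  using dt_pos theta_pos by (simp add: c_stab_def field_simps)

lemma scheme_iff_scheme_eqs: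
  assumes "h = (b - a) / real N"
  shows "scheme a b N \<gamma> \<mu> \<alpha> \<chi> \<theta> dt rho_old rho phi rn fn \<longleftrightarrow> scheme_eqs rn fn"
proof -
  have "lap_h h N (\<lambda>p. fn p + phi p) p = div_flux h N (diff_quot h fn) p + lap_h h N phi p"
    if p: "p \<in> cells N" for p
  proof -
    have "diff_quot h (\<lambda>p. fn p + phi p) = (\<lambda>q e. diff_quot h fn q e + 1 * diff_quot h phi q e)"
      using h_pos by (auto simp: diff_quot_def fun_eq_iff field_simps)
    then show ?thesis
      using div_flux_add_scaled[of h N "diff_quot h fn" 1 "diff_quot h phi" p]
      by (simp add: lap_h_eq_div_flux[OF p])
  qed
  moreover have "divgrad_h h N rhat (potential rn fn) p = div_flux h N (mobility_flux (potential rn fn)) p"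
    if "p \<in> cells N" for p
    unfolding divgrad_h_eq_div_flux[OF that] mobility_flux_def mobility_def ..
  moreover have "potential rn fn = (\<lambda>p. \<gamma> * (ln (rn p) - (rn p - rho p) / (2 * rn p)
      - (rn p - rho p)\<^sup>2 / (6 * (rn p)\<^sup>2)) - \<chi> / 2 * (fn p + phi p) + \<chi>\<^sup>2 * dt / (4 * \<theta>) * (rn p - rho p))"
    by (simp add: fun_eq_iff potential_def S_half_def c_stab_def)
  ultimately show ?thesis
    unfolding scheme_def Let_def scheme_eqs_def assms[symmetric] rhat_def[symmetric]
    by (intro ball_cong refl) simp
qed

section \<open>Uniqueness\<close>

lemma sum_diff_mult_mobility_flux_nonneg:
  "(\<Sum>e\<in>set dirs. \<Sum>q\<in>inner_faces N e. (W (padd q e) - W q) * mobility_flux W q e) \<ge> 0"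
proof (intro sum_nonneg)
  fix e q
  have "(W (padd q e) - W q) * mobility_flux W q e = mobility e q * (W (padd q e) - W q)\<^sup>2 / h"
    by (simp add: mobility_flux_def diff_quot_def power2_eq_square)
  then show "(W (padd q e) - W q) * mobility_flux W q e \<ge> 0"
    using mobility_pos[of e q] h_pos by simp
qed

lemma sum_mult_lap_nonpos: "(\<Sum>p\<in>cells N. u p * div_flux h N (diff_quot h u) p) \<le> 0"
proof -
  have "(\<Sum>e\<in>set dirs. \<Sum>q\<in>inner_faces N e. (u (padd q e) - u q) * diff_quot h u q e) \<ge> 0"
    using h_pos by (intro sum_nonneg) (simp add: diff_quot_def power2_eq_square[symmetric])
  then show ?thesis
    unfolding summation_by_parts using h_pos by (simp add: divide_nonneg_pos)
qed

lemma differences_vanish: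
  assumes dx: "\<And>p. p \<in> cells N \<Longrightarrow> dx p = dt * div_flux h N (mobility_flux dW) p"
    and dy: "\<And>p. p \<in> cells N \<Longrightarrow>
      \<theta> * dy p / dt = \<mu>/2 * div_flux h N (diff_quot h dy) p - \<alpha>/2 * dy p + \<chi>/2 * dx p"
    and dW: "\<And>p. dW p = \<gamma> * dS p - \<chi>/2 * dy p + c_stab * dx p"
    and mono: "\<And>p. p \<in> cells N \<Longrightarrow> dS p * dx p \<ge> 0"
    and strict: "\<And>p. p \<in> cells N \<Longrightarrow> dS p * dx p = 0 \<Longrightarrow> dx p = 0"
    and p: "p \<in> cells N"
  shows "dx p = 0 \<and> dy p = 0"
proof -
  define k where "k = \<theta> / dt"
  define v where "v p = \<alpha>/2 * dy p - \<mu>/2 * div_flux h N (diff_quot h dy) p" for p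
  have k: "k > 0" using theta_pos dt_pos by (simp add: k_def)
  have dx_v: "dx p = 2/\<chi> * (k * dy p + v p)" if "p \<in> cells N" for p
    using dy[OF that] chi_pos dt_pos by (simp add: k_def v_def field_simps)
  \<comment> \<open>\<open>dx\<close> eliminated through the \<open>\<phi>\<close>-equation; the cross terms cancel because \<open>c_stab = \<chi>\<^sup>2/(4k)\<close>\<close>
  have pointwise: "dW p * dx p = \<gamma> * (dS p * dx p) + dy p * v p + (v p)\<^sup>2 / k" if "p \<in> cells N" for p
    unfolding dW dx_v[OF that] c_stab_eq k_def[symmetric] using chi_pos k
    by (simp add: field_simps power2_eq_square)
  have "(\<Sum>p\<in>cells N. dW p * dx p) = dt * (\<Sum>p\<in>cells N. dW p * div_flux h N (mobility_flux dW) p)"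
    by (simp add: dx sum_distrib_left mult.left_commute)
  also have "\<dots> \<le> 0"
    unfolding summation_by_parts using sum_diff_mult_mobility_flux_nonneg[of dW] dt_pos h_pos
    by (simp add: mult_nonneg_nonneg divide_nonneg_pos)
  finally have total: "\<gamma> * (\<Sum>p\<in>cells N. dS p * dx p) + (\<Sum>p\<in>cells N. dy p * v p)
      + (\<Sum>p\<in>cells N. (v p)\<^sup>2 / k) \<le> 0"
    by (simp add: pointwise sum.distrib sum_distrib_left)
  have dyv: "(\<Sum>p\<in>cells N. dy p * v p) \<ge> 0"
  proof -
    have "(\<Sum>p\<in>cells N. dy p * v p) = \<alpha>/2 * (\<Sum>p\<in>cells N. (dy p)\<^sup>2)
        - \<mu>/2 * (\<Sum>p\<in>cells N. dy p * div_flux h N (diff_quot h dy) p)"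
      unfolding v_def by (simp add: sum_distrib_left sum_subtractf algebra_simps power2_eq_square)
    moreover have "\<mu>/2 * (\<Sum>p\<in>cells N. dy p * div_flux h N (diff_quot h dy) p) \<le> 0"
      using sum_mult_lap_nonpos[of dy] mu_pos by (simp add: mult_nonneg_nonpos)
    moreover have "\<alpha>/2 * (\<Sum>p\<in>cells N. (dy p)\<^sup>2) \<ge> 0"
      using alpha_pos by (simp add: sum_nonneg)
    ultimately show ?thesis by linarith
  qed
  have "(\<Sum>p\<in>cells N. dS p * dx p) \<ge> 0" using mono by (simp add: sum_nonneg)
  then have "(\<Sum>p\<in>cells N. (v p)\<^sup>2 / k) \<ge> 0" "\<gamma> * (\<Sum>p\<in>cells N. dS p * dx p) \<ge> 0"
    using k gamma_pos by (auto intro!: sum_nonneg)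
  then have "\<gamma> * (\<Sum>p\<in>cells N. dS p * dx p) = 0" and dyv0: "(\<Sum>p\<in>cells N. dy p * v p) = 0"
    using total dyv by linarith+
  then have "(\<Sum>p\<in>cells N. dS p * dx p) = 0" using gamma_pos by simp
  then have dx0: "dx p = 0" if "p \<in> cells N" for p
    using that strict mono by (simp add: sum_nonneg_eq_0_iff)
  have "v p = - k * dy p" if "p \<in> cells N" for p
    using dx_v[OF that] dx0[OF that] chi_pos by (simp add: field_simps)
  then have "(\<Sum>p\<in>cells N. dy p * v p) = - k * (\<Sum>p\<in>cells N. (dy p)\<^sup>2)"
    by (simp add: sum_distrib_left power2_eq_square mult.left_commute)
  then have "(\<Sum>p\<in>cells N. (dy p)\<^sup>2) = 0" using dyv0 k by simp
  then show ?thesis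
    using dx0[OF p] p by (simp add: sum_nonneg_eq_0_iff)
qed

lemma scheme_eqs_unique_at:
  assumes pos1: "\<forall>p\<in>cells N. rn1 p > 0" and pos2: "\<forall>p\<in>cells N. rn2 p > 0"
    and eq1: "scheme_eqs rn1 fn1" and eq2: "scheme_eqs rn2 fn2"
    and p: "p \<in> cells N"
  shows "rn1 p = rn2 p \<and> fn1 p = fn2 p"
proof -
  define dW where "dW p = potential rn1 fn1 p - potential rn2 fn2 p" for p
  have "mobility_flux dW = (\<lambda>q e. mobility_flux (potential rn1 fn1) q e - mobility_flux (potential rn2 fn2) q e)"
    using h_pos by (simp add: fun_eq_iff mobility_flux_def dW_def diff_quot_def field_simps)
  then have flux_dW: "div_flux h N (mobility_flux dW) p
      = div_flux h N (mobility_flux (potential rn1 fn1)) p - div_flux h N (mobility_flux (potential rn2 fn2)) p" for p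
    by (simp add: div_flux_diff)
  have "rn1 p - rn2 p = 0 \<and> fn1 p - fn2 p = 0"
  proof (rule differences_vanish[where dx="\<lambda>p. rn1 p - rn2 p" and dy="\<lambda>p. fn1 p - fn2 p"
        and dW=dW and dS="\<lambda>p. S_half (rho p) (rn1 p) - S_half (rho p) (rn2 p)"])
    fix p assume "p \<in> cells N"
    with eq1 eq2 have e1: "(rn1 p - rho p) / dt = div_flux h N (mobility_flux (potential rn1 fn1)) p"
      and e2: "(rn2 p - rho p) / dt = div_flux h N (mobility_flux (potential rn2 fn2)) p"
      and f1: "\<theta> * (fn1 p - phi p) / dt = \<mu> / 2 * (div_flux h N (diff_quot h fn1) p + lap_h h N phi p)
        - \<alpha> / 2 * (fn1 p + phi p) + \<chi> / 2 * (rn1 p + rho p)"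
      and f2: "\<theta> * (fn2 p - phi p) / dt = \<mu> / 2 * (div_flux h N (diff_quot h fn2) p + lap_h h N phi p)
        - \<alpha> / 2 * (fn2 p + phi p) + \<chi> / 2 * (rn2 p + rho p)"
      unfolding scheme_eqs_def by auto
    show "rn1 p - rn2 p = dt * div_flux h N (mobility_flux dW) p"
      using e1 e2 dt_pos by (simp add: flux_dW field_simps)
    show "\<theta> * (fn1 p - fn2 p) / dt = \<mu>/2 * div_flux h N (diff_quot h (\<lambda>p. fn1 p - fn2 p)) p
        - \<alpha>/2 * (fn1 p - fn2 p) + \<chi>/2 * (rn1 p - rn2 p)"
      using f1 f2 dt_pos by (simp add: div_flux_diff_quot_diff field_simps)
    show "(S_half (rho p) (rn1 p) - S_half (rho p) (rn2 p)) * (rn1 p - rn2 p) \<ge> 0"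
      "(S_half (rho p) (rn1 p) - S_half (rho p) (rn2 p)) * (rn1 p - rn2 p) = 0 \<Longrightarrow> rn1 p - rn2 p = 0"
      using S_half_monotone[of "rn1 p" "rn2 p"] pos1 pos2 \<open>p \<in> cells N\<close> by auto
  qed (simp_all add: p dW_def potential_def field_simps)
  then show ?thesis by simp
qed

lemma scheme_eqs_unique:
  assumes "rn1 \<in> gridC N" "fn1 \<in> gridC N" "\<forall>p\<in>cells N. rn1 p > 0" "scheme_eqs rn1 fn1"
    and "rn2 \<in> gridC N" "fn2 \<in> gridC N" "\<forall>p\<in>cells N. rn2 p > 0" "scheme_eqs rn2 fn2"
  shows "rn1 = rn2 \<and> fn1 = fn2"
proof -
  have "rn1 p = rn2 p \<and> fn1 p = fn2 p" if "p \<in> cells N" for p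
    using scheme_eqs_unique_at[OF assms(3,7,4,8) that] .
  then show ?thesis using gridC_eqI[OF assms(1,5)] gridC_eqI[OF assms(2,6)] by blast
qed

section \<open>Existence: the scheme as a critical point\<close>

text \<open>The unknowns are collected in one \<open>z :: idx \<times> idx \<Rightarrow> real\<close>: \<open>z (q, e)\<close> with \<open>e \<in> set dirs\<close> is the
  flux through the face between \<open>q\<close> and \<open>q + e\<close>, and \<open>z (p, origin)\<close> is \<open>\<phi>\<^sup>n\<^sup>+\<^sup>1\<close> at the cell \<open>p\<close>.
  The density is then \<open>\<rho>\<^sup>n + \<Delta>t \<nabla>\<^sub>h\<cdot>F\<close>, so the density equation holds by construction once
  the flux is the mobility flux of the potential.\<close>

definition origin :: idx where
  "origin = (0, 0, 0)"

definition coords :: "(idx \<times> idx) set" where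
  "coords = (\<Union>e\<in>set dirs. (\<lambda>q. (q, e)) ` inner_faces N e) \<union> (\<lambda>p. (p, origin)) ` cells N"

definition flux_of :: "(idx \<times> idx \<Rightarrow> real) \<Rightarrow> idx \<Rightarrow> idx \<Rightarrow> real" where
  "flux_of z q e = z (q, e)"

definition density :: "(idx \<times> idx \<Rightarrow> real) \<Rightarrow> idx \<Rightarrow> real" where
  "density z p = rho p + dt * div_flux h N (flux_of z) p"

definition phi_of :: "(idx \<times> idx \<Rightarrow> real) \<Rightarrow> idx \<Rightarrow> real" where
  "phi_of z p = z (p, origin)"

text \<open>With these two, the \<open>\<phi>\<close>-equation reads
  \<open>phi_coef \<phi>\<^sup>n\<^sup>+\<^sup>1 - phi_rhs - \<chi>/2 \<rho>\<^sup>n\<^sup>+\<^sup>1 = \<mu>/2 \<Delta>\<^sub>h\<phi>\<^sup>n\<^sup>+\<^sup>1\<close>, i.e. \<open>cell_energy_dy\<close> balances the Dirichlet term.\<close>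

definition phi_coef :: real where
  "phi_coef = \<theta>/dt + \<alpha>/2"

definition phi_rhs :: "idx \<Rightarrow> real" where
  "phi_rhs p = (\<theta>/dt - \<alpha>/2) * phi p + \<mu>/2 * lap_h h N phi p + \<chi>/2 * rho p"

definition cell_energy :: "idx \<Rightarrow> real \<Rightarrow> real \<Rightarrow> real" where
  "cell_energy p x y = \<gamma> * G_half (rho p) x + c_stab/2 * (x - rho p)\<^sup>2 - \<chi>/2 * (y + phi p) * x
     + phi_coef/2 * y\<^sup>2 - phi_rhs p * y"

definition cell_energy_dx :: "idx \<Rightarrow> real \<Rightarrow> real \<Rightarrow> real" where
  "cell_energy_dx p x y = \<gamma> * S_half (rho p) x + c_stab * (x - rho p) - \<chi>/2 * (y + phi p)"

definition cell_energy_dy :: "idx \<Rightarrow> real \<Rightarrow> real \<Rightarrow> real" where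
  "cell_energy_dy p x y = phi_coef * y - phi_rhs p - \<chi>/2 * x"

definition dissipation :: "(idx \<times> idx \<Rightarrow> real) \<Rightarrow> real" where
  "dissipation z = (\<Sum>e\<in>set dirs. \<Sum>q\<in>inner_faces N e. dt * (z (q, e))\<^sup>2 / (2 * mobility e q))"

definition dirichlet_energy :: "(idx \<times> idx \<Rightarrow> real) \<Rightarrow> real" where
  "dirichlet_energy z = \<mu>/4 * (\<Sum>e\<in>set dirs. \<Sum>q\<in>inner_faces N e. (diff_quot h (phi_of z) q e)\<^sup>2)"

definition energy :: "(idx \<times> idx \<Rightarrow> real) \<Rightarrow> real" where
  "energy z = dissipation z + (\<Sum>p\<in>cells N. cell_energy p (density z p) (phi_of z p)) + dirichlet_energy z"

definition energy_deriv :: "(idx \<times> idx \<Rightarrow> real) \<Rightarrow> (idx \<times> idx \<Rightarrow> real) \<Rightarrow> real" where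
  "energy_deriv z v = (\<Sum>e\<in>set dirs. \<Sum>q\<in>inner_faces N e. dt * z (q, e) * v (q, e) / mobility e q)
    + (\<Sum>p\<in>cells N. cell_energy_dx p (density z p) (phi_of z p) * (dt * div_flux h N (flux_of v) p)
                   + cell_energy_dy p (density z p) (phi_of z p) * phi_of v p)
    + \<mu>/2 * (\<Sum>e\<in>set dirs. \<Sum>q\<in>inner_faces N e. diff_quot h (phi_of z) q e * diff_quot h (phi_of v) q e)"

definition unit_coord :: "idx \<times> idx \<Rightarrow> idx \<times> idx \<Rightarrow> real" where
  "unit_coord i = (\<lambda>j. if j = i then 1 else 0)"

lemma origin_notin_dirs: "origin \<notin> set dirs"
  by (simp add: origin_def set_dirs)

lemma cell_energy_has_derivative:
  assumes x: "x > 0"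
  shows "((\<lambda>t. cell_energy p (x + t * u) (y + t * w)) has_real_derivative
           cell_energy_dx p x y * u + cell_energy_dy p x y * w) (at 0)"
proof -
  have lin: "((\<lambda>t. x + t * u) has_real_derivative u) (at 0)"
    by (rule derivative_eq_intros refl | simp)+
  have G: "((\<lambda>t. G_half (rho p) (x + t * u)) has_real_derivative S_half (rho p) (x + 0 * u) * u) (at 0)"
    by (rule DERIV_chain2[OF _ lin]) (simp add: x G_half_has_derivative)
  show ?thesis
    unfolding cell_energy_def
    by (rule derivative_eq_intros G refl | simp)+
       (simp add: cell_energy_dx_def cell_energy_dy_def algebra_simps)
qed

lemma density_add_scaled:
  "density (\<lambda>i. z i + t * v i) p = density z p + t * (dt * div_flux h N (flux_of v) p)"
proof -
  have "flux_of (\<lambda>i. z i + t * v i) = (\<lambda>q e. flux_of z q e + t * flux_of v q e)"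
    by (simp add: fun_eq_iff flux_of_def)
  then show ?thesis by (simp add: density_def div_flux_add_scaled algebra_simps)
qed

lemma dissipation_has_derivative:
  "((\<lambda>t. dissipation (\<lambda>i. z i + t * v i)) has_real_derivative
     (\<Sum>e\<in>set dirs. \<Sum>q\<in>inner_faces N e. dt * z (q, e) * v (q, e) / mobility e q)) (at 0)"
  unfolding dissipation_def
proof (intro DERIV_sum)
  fix e q
  have "((\<lambda>t. (z (q, e) + t * v (q, e))\<^sup>2) has_real_derivative 2 * z (q, e) * v (q, e)) (at 0)"
    by (rule derivative_eq_intros refl | simp)+
  from DERIV_cdivide[OF DERIV_cmult[OF this, of dt], of "2 * mobility e q"]
  show "((\<lambda>t. dt * (z (q, e) + t * v (q, e))\<^sup>2 / (2 * mobility e q)) has_real_derivative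
      dt * z (q, e) * v (q, e) / mobility e q) (at 0)"
    using mobility_pos[of e q] by (simp add: mult.assoc)
qed

lemma dirichlet_energy_has_derivative:
  "((\<lambda>t. dirichlet_energy (\<lambda>i. z i + t * v i)) has_real_derivative
     \<mu>/2 * (\<Sum>e\<in>set dirs. \<Sum>q\<in>inner_faces N e. diff_quot h (phi_of z) q e * diff_quot h (phi_of v) q e)) (at 0)"
proof -
  have "((\<lambda>t. \<mu>/4 * (\<Sum>e\<in>set dirs. \<Sum>q\<in>inner_faces N e.
            (diff_quot h (phi_of z) q e + t * diff_quot h (phi_of v) q e)\<^sup>2)) has_real_derivative
      \<mu>/4 * (\<Sum>e\<in>set dirs. \<Sum>q\<in>inner_faces N e. 2 * (diff_quot h (phi_of z) q e * diff_quot h (phi_of v) q e))) (at 0)"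
    by (intro DERIV_cmult DERIV_sum) (rule derivative_eq_intros refl | simp)+
  moreover have "diff_quot h (phi_of (\<lambda>i. z i + t * v i)) q e
      = diff_quot h (phi_of z) q e + t * diff_quot h (phi_of v) q e" for t q e
    using h_pos by (simp add: diff_quot_def phi_of_def field_simps)
  ultimately show ?thesis
    by (simp add: dirichlet_energy_def sum_distrib_left[symmetric])
qed

lemma energy_has_derivative:
  assumes "\<forall>p\<in>cells N. density z p > 0"
  shows "((\<lambda>t. energy (\<lambda>i. z i + t * v i)) has_real_derivative energy_deriv z v) (at 0)"
proof -
  have "((\<lambda>t. \<Sum>p\<in>cells N. cell_energy p (density (\<lambda>i. z i + t * v i) p) (phi_of (\<lambda>i. z i + t * v i) p))
      has_real_derivative (\<Sum>p\<in>cells N. cell_energy_dx p (density z p) (phi_of z p) * (dt * div_flux h N (flux_of v) p)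
                   + cell_energy_dy p (density z p) (phi_of z p) * phi_of v p)) (at 0)"
    unfolding density_add_scaled using assms
    by (intro DERIV_sum) (simp add: phi_of_def cell_energy_has_derivative)
  then show ?thesis
    unfolding energy_def[abs_def] energy_deriv_def
    by (intro DERIV_add dissipation_has_derivative dirichlet_energy_has_derivative)
qed

lemma energy_deriv_eq:
  "energy_deriv z v =
     (\<Sum>e\<in>set dirs. \<Sum>q\<in>inner_faces N e. v (q, e) *
        (dt * z (q, e) / mobility e q - dt * diff_quot h (\<lambda>p. cell_energy_dx p (density z p) (phi_of z p)) q e))
   + (\<Sum>p\<in>cells N. phi_of v p *
        (cell_energy_dy p (density z p) (phi_of z p) - \<mu>/2 * div_flux h N (diff_quot h (phi_of z)) p))"
proof -
  define W where "W p = cell_energy_dx p (density z p) (phi_of z p)" for p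
  have flux: "(\<Sum>p\<in>cells N. W p * div_flux h N (flux_of v) p)
      = - (\<Sum>e\<in>set dirs. \<Sum>q\<in>inner_faces N e. v (q, e) * diff_quot h W q e)"
    unfolding summation_by_parts
    by (simp add: flux_of_def diff_quot_def sum_divide_distrib mult.commute)
  have phi: "(\<Sum>p\<in>cells N. phi_of v p * div_flux h N (diff_quot h (phi_of z)) p)
      = - (\<Sum>e\<in>set dirs. \<Sum>q\<in>inner_faces N e. diff_quot h (phi_of z) q e * diff_quot h (phi_of v) q e)"
    unfolding summation_by_parts
    by (simp add: diff_quot_def sum_divide_distrib mult.commute)
  have cells: "(\<Sum>p\<in>cells N. W p * (dt * div_flux h N (flux_of v) p)
                   + cell_energy_dy p (density z p) (phi_of z p) * phi_of v p)
      = - dt * (\<Sum>e\<in>set dirs. \<Sum>q\<in>inner_faces N e. v (q, e) * diff_quot h W q e)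
        + (\<Sum>p\<in>cells N. phi_of v p * cell_energy_dy p (density z p) (phi_of z p))"
  proof -
    have "(\<Sum>p\<in>cells N. W p * (dt * div_flux h N (flux_of v) p))
        = dt * (\<Sum>p\<in>cells N. W p * div_flux h N (flux_of v) p)"
      by (simp add: sum_distrib_left mult.left_commute)
    then show ?thesis by (simp add: sum.distrib flux mult.commute)
  qed
  have grad: "\<mu>/2 * (\<Sum>e\<in>set dirs. \<Sum>q\<in>inner_faces N e. diff_quot h (phi_of z) q e * diff_quot h (phi_of v) q e)
      = - (\<Sum>p\<in>cells N. phi_of v p * (\<mu>/2 * div_flux h N (diff_quot h (phi_of z)) p))"
  proof -
    have "(\<Sum>p\<in>cells N. phi_of v p * (\<mu>/2 * div_flux h N (diff_quot h (phi_of z)) p))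
        = \<mu>/2 * (\<Sum>p\<in>cells N. phi_of v p * div_flux h N (diff_quot h (phi_of z)) p)"
      by (simp add: sum_distrib_left mult.left_commute)
    then show ?thesis by (simp add: phi)
  qed
  show ?thesis
    unfolding energy_deriv_def W_def[symmetric] cells grad
    by (simp add: sum_distrib_left sum_subtractf sum_negf right_diff_distrib sum.distrib algebra_simps)
qed

lemma unit_coord_mult: "unit_coord i j * B = (if j = i then B else 0)"
  by (simp add: unit_coord_def)

lemma sum_unit_coord_faces:
  assumes "e0 \<in> set dirs" "q0 \<in> inner_faces N e0"
  shows "(\<Sum>e\<in>set dirs. \<Sum>q\<in>inner_faces N e. unit_coord (q0, e0) (q, e) * B q e) = B q0 e0"
proof -
  have "(\<Sum>q\<in>inner_faces N e. unit_coord (q0, e0) (q, e) * B q e) = (if e = e0 then B q0 e0 else 0)" for e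
    using assms(2) by (simp add: unit_coord_mult)
  then show ?thesis using assms(1) by simp
qed

lemma energy_deriv_unit_flux:
  assumes "e \<in> set dirs" "q \<in> inner_faces N e"
  shows "energy_deriv z (unit_coord (q, e)) =
    dt * z (q, e) / mobility e q - dt * diff_quot h (\<lambda>p. cell_energy_dx p (density z p) (phi_of z p)) q e"
proof -
  have "phi_of (unit_coord (q, e)) p = 0" for p
    using assms(1) origin_notin_dirs by (auto simp: phi_of_def unit_coord_def)
  then show ?thesis
    by (simp add: energy_deriv_eq sum_unit_coord_faces[OF assms])
qed

lemma energy_deriv_unit_phi:
  assumes "p \<in> cells N"
  shows "energy_deriv z (unit_coord (p, origin)) =
    cell_energy_dy p (density z p) (phi_of z p) - \<mu>/2 * div_flux h N (diff_quot h (phi_of z)) p"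
proof -
  have "unit_coord (p, origin) (q, e) = 0" if "e \<in> set dirs" for q e
    using that origin_notin_dirs by (auto simp: unit_coord_def)
  then show ?thesis
    using assms by (simp add: energy_deriv_eq phi_of_def unit_coord_mult)
qed

definition admissible :: "(idx \<times> idx \<Rightarrow> real) \<Rightarrow> bool" where
  "admissible z \<longleftrightarrow> (\<forall>i. i \<notin> coords \<longrightarrow> z i = 0) \<and> (\<forall>p\<in>cells N. density z p > 0)"

lemma cell_energy_lower_bound:
  assumes p: "p \<in> cells N"
  obtains C where "\<And>x y. x > 0 \<Longrightarrow> cell_energy p x y \<ge> \<gamma> * (rho p)\<^sup>2 / (12 * x) + \<alpha>/8 * y\<^sup>2 - C"
proof -
  define r where "r = rho p"
  define k where "k = \<theta> / dt"
  define B where "B = 5/3 + (c_stab * r + \<chi>/2 * phi p) / \<gamma>"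
  have r: "r > 0" using rho_pos p by (simp add: r_def)
  have k: "k > 0" using theta_pos dt_pos by (simp add: k_def)
  \<comment> \<open>complete the square in \<open>x\<close> and \<open>y\<close>, and split \<open>G_half\<close> into two terms that are bounded below\<close>
  have split: "cell_energy p x y = \<gamma> * (x * ln x - B * x) + \<gamma> * (5*r/6 * ln x + r\<^sup>2/(6*x))
      + (\<chi> * x / 2 - k * y)\<^sup>2 / (2 * k) + (\<alpha>/4 * y\<^sup>2 - phi_rhs p * y) + c_stab * r\<^sup>2 / 2" for x y
  proof -
    have entropy: "\<gamma> * (x * ln x - B * x) = \<gamma> * (x * ln x) - 5/3 * \<gamma> * x - c_stab * r * x - \<chi>/2 * phi p * x"
      unfolding B_def using gamma_pos by (simp add: field_simps)
    have square: "(\<chi> * x / 2 - k * y)\<^sup>2 / (2 * k) = c_stab/2 * x\<^sup>2 - \<chi>/2 * x * y + k/2 * y\<^sup>2"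
      unfolding c_stab_eq k_def[symmetric] using k by (simp add: field_simps power2_eq_square)
    show ?thesis
      unfolding entropy square cell_energy_def G_half_def phi_coef_def k_def[symmetric] r_def
      by (simp add: field_simps power2_eq_square)
  qed
  show ?thesis
  proof
    fix x y :: real assume x: "x > 0"
    have "\<gamma> * (x * ln x - B * x) \<ge> \<gamma> * (- exp B)"
      using xlnx_lower_bound[OF x, of B] gamma_pos by (intro mult_left_mono) auto
    moreover have "\<gamma> * (5*r/6 * ln x + r\<^sup>2/(6*x)) \<ge> \<gamma> * (5*r/6 * (ln (r/10) + 1)) + \<gamma> * r\<^sup>2 / (12 * x)"
      using mult_left_mono[OF ln_plus_inverse_lower_bound[OF x r], of \<gamma>] gamma_pos
      by (simp add: algebra_simps)
    moreover have "(\<chi> * x / 2 - k * y)\<^sup>2 / (2 * k) \<ge> 0" using k by simp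
    moreover have "\<alpha>/4 * y\<^sup>2 - phi_rhs p * y \<ge> \<alpha>/8 * y\<^sup>2 - 2 * (phi_rhs p)\<^sup>2 / \<alpha>"
      using quadratic_lower_bound alpha_pos by blast
    ultimately show "cell_energy p x y \<ge> \<gamma> * (rho p)\<^sup>2 / (12 * x) + \<alpha>/8 * y\<^sup>2
       - (\<gamma> * exp B - \<gamma> * (5*r/6 * (ln (r/10) + 1)) + 2 * (phi_rhs p)\<^sup>2 / \<alpha> - c_stab * r\<^sup>2 / 2)"
      unfolding split by (simp add: r_def)
  qed
qed

lemma dissipation_nonneg: "dissipation z \<ge> 0"
  unfolding dissipation_def using dt_pos mobility_pos by (intro sum_nonneg) (simp add: less_imp_le)

lemma dirichlet_energy_nonneg: "dirichlet_energy z \<ge> 0"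
  unfolding dirichlet_energy_def using mu_pos by (intro mult_nonneg_nonneg sum_nonneg) auto

lemma energy_sublevel_bound:
  obtains M where "M > 0" and
    "\<And>z p. admissible z \<Longrightarrow> energy z \<le> energy (\<lambda>_. 0) \<Longrightarrow> p \<in> cells N \<Longrightarrow>
       dissipation z + (\<gamma> * (rho p)\<^sup>2 / (12 * density z p) + \<alpha>/8 * (phi_of z p)\<^sup>2) \<le> M"
proof -
  define L where "L z p = \<gamma> * (rho p)\<^sup>2 / (12 * density z p) + \<alpha>/8 * (phi_of z p)\<^sup>2" for z p
  have "\<forall>p\<in>cells N. \<exists>C. \<forall>x>0. \<forall>y. cell_energy p x y \<ge> \<gamma> * (rho p)\<^sup>2 / (12 * x) + \<alpha>/8 * y\<^sup>2 - C"
    by (metis cell_energy_lower_bound)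
  then obtain C where C: "\<And>p x y. p \<in> cells N \<Longrightarrow> x > 0 \<Longrightarrow>
      cell_energy p x y \<ge> \<gamma> * (rho p)\<^sup>2 / (12 * x) + \<alpha>/8 * y\<^sup>2 - C p"
    by metis
  define SC where "SC = (\<Sum>p\<in>cells N. \<bar>C p\<bar>)"
  define M where "M = \<bar>energy (\<lambda>_. 0)\<bar> + SC + 1"
  show ?thesis
  proof
    show "M > 0" unfolding M_def SC_def by (simp add: add_nonneg_pos sum_nonneg)
    fix z p0 assume adm: "admissible z" and sub: "energy z \<le> energy (\<lambda>_. 0)" and p0: "p0 \<in> cells N"
    have L_nonneg: "L z p \<ge> 0" if "p \<in> cells N" for p
    proof -
      have "density z p > 0" using that adm by (simp add: admissible_def)
      then show ?thesis
        unfolding L_def using gamma_pos alpha_pos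
        by (intro add_nonneg_nonneg divide_nonneg_pos mult_nonneg_nonneg) auto
    qed
    have "L z p0 - SC \<le> (\<Sum>p\<in>cells N. L z p - \<bar>C p\<bar>)"
    proof -
      have "L z p0 \<le> (\<Sum>p\<in>cells N. L z p)" using p0 L_nonneg by (intro member_le_sum) auto
      then show ?thesis by (simp add: SC_def sum_subtractf)
    qed
    also have "\<dots> \<le> (\<Sum>p\<in>cells N. cell_energy p (density z p) (phi_of z p))"
    proof (rule sum_mono)
      fix p assume p: "p \<in> cells N"
      then have "density z p > 0" using adm by (simp add: admissible_def)
      then have "L z p - C p \<le> cell_energy p (density z p) (phi_of z p)"
        unfolding L_def by (rule C[OF p])
      then show "L z p - \<bar>C p\<bar> \<le> cell_energy p (density z p) (phi_of z p)" by linarith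
    qed
    finally have "L z p0 - SC \<le> (\<Sum>p\<in>cells N. cell_energy p (density z p) (phi_of z p))" .
    then show "dissipation z + (\<gamma> * (rho p0)\<^sup>2 / (12 * density z p0) + \<alpha>/8 * (phi_of z p0)\<^sup>2) \<le> M"
      using sub dirichlet_energy_nonneg[of z] unfolding energy_def M_def L_def by linarith
  qed
qed

lemma abs_flux_le_dissipation:
  assumes "e \<in> set dirs" "q \<in> inner_faces N e"
  shows "\<bar>z (q, e)\<bar> \<le> sqrt (2 * mobility e q * dissipation z / dt)"
proof -
  have "dt * (z (q, e))\<^sup>2 / (2 * mobility e q) \<le> dissipation z"
    unfolding dissipation_def using assms dt_pos mobility_pos
    by (intro member_le_sum_sum[where f="\<lambda>e q. dt * (z (q, e))\<^sup>2 / (2 * mobility e q)"])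
       (auto intro!: divide_nonneg_pos simp: less_imp_le)
  then have "(z (q, e))\<^sup>2 \<le> 2 * mobility e q * dissipation z / dt"
    using dt_pos mobility_pos[of e q] by (simp add: divide_le_eq field_simps)
  then show ?thesis by (metis real_sqrt_abs real_sqrt_le_mono)
qed

lemma energy_sublevel_bounded:
  "\<exists>R \<delta>. \<delta> > 0 \<and> (\<forall>z. admissible z \<and> energy z \<le> energy (\<lambda>_. 0) \<longrightarrow>
       (\<forall>i\<in>coords. \<bar>z i\<bar> \<le> R) \<and> (\<forall>p\<in>cells N. \<delta> \<le> density z p))"
proof -
  obtain M where M: "M > 0" and bound: "\<And>z p. admissible z \<Longrightarrow> energy z \<le> energy (\<lambda>_. 0) \<Longrightarrow>
      p \<in> cells N \<Longrightarrow> dissipation z + (\<gamma> * (rho p)\<^sup>2 / (12 * density z p) + \<alpha>/8 * (phi_of z p)\<^sup>2) \<le> M"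
    using energy_sublevel_bound by blast
  define \<delta> where "\<delta> = Min ((\<lambda>p. \<gamma> * (rho p)\<^sup>2 / (12 * M)) ` cells N)"
  define R where "R = sqrt (8 * M / \<alpha>) + (\<Sum>e\<in>set dirs. \<Sum>q\<in>inner_faces N e. sqrt (2 * mobility e q * M / dt))"
  have face_sqrt_nonneg: "sqrt (2 * mobility e q * M / dt) \<ge> 0" for e q
    using M dt_pos mobility_pos[of e q] by simp
  have "\<delta> > 0"
    unfolding \<delta>_def using cells_nonempty[OF N_pos] rho_pos gamma_pos M by (subst Min_gr_iff) auto
  moreover have "(\<forall>i\<in>coords. \<bar>z i\<bar> \<le> R) \<and> (\<forall>p\<in>cells N. \<delta> \<le> density z p)"
    if adm: "admissible z" and sub: "energy z \<le> energy (\<lambda>_. 0)" for z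
  proof -
    have pos: "density z p > 0" if "p \<in> cells N" for p
      using adm that by (simp add: admissible_def)
    have cell: "\<gamma> * (rho p)\<^sup>2 / (12 * density z p) \<le> M"
      and phi: "\<alpha>/8 * (phi_of z p)\<^sup>2 \<le> M"
      and diss: "dissipation z \<le> M" if "p \<in> cells N" for p
    proof -
      have "\<gamma> * (rho p)\<^sup>2 / (12 * density z p) \<ge> 0" "\<alpha>/8 * (phi_of z p)\<^sup>2 \<ge> 0"
        using pos[OF that] gamma_pos alpha_pos by (auto intro!: divide_nonneg_pos mult_nonneg_nonneg)
      then show "\<gamma> * (rho p)\<^sup>2 / (12 * density z p) \<le> M" "\<alpha>/8 * (phi_of z p)\<^sup>2 \<le> M"
        "dissipation z \<le> M"
        using bound[OF adm sub that] dissipation_nonneg[of z] by linarith+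
    qed
    show "(\<forall>i\<in>coords. \<bar>z i\<bar> \<le> R) \<and> (\<forall>p\<in>cells N. \<delta> \<le> density z p)"
    proof (intro conjI ballI)
      fix p assume p: "p \<in> cells N"
      have "\<gamma> * (rho p)\<^sup>2 / (12 * M) \<le> density z p"
        using cell[OF p] pos[OF p] M by (simp add: divide_le_eq field_simps)
      moreover have "\<delta> \<le> \<gamma> * (rho p)\<^sup>2 / (12 * M)"
        unfolding \<delta>_def using p by (intro Min_le) auto
      ultimately show "\<delta> \<le> density z p" by linarith
    next
      fix i assume "i \<in> coords"
      then consider (face) e q where "e \<in> set dirs" "q \<in> inner_faces N e" "i = (q, e)"
        | (cell) p where "p \<in> cells N" "i = (p, origin)"
        unfolding coords_def by blast
      then show "\<bar>z i\<bar> \<le> R"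
      proof cases
        case face
        obtain p where "p \<in> cells N" using cells_nonempty[OF N_pos] by blast
        then have "sqrt (2 * mobility e q * dissipation z / dt) \<le> sqrt (2 * mobility e q * M / dt)"
          using diss dt_pos mobility_pos[of e q] by (simp add: divide_right_mono)
        with abs_flux_le_dissipation[OF face(1,2), of z]
        have "\<bar>z (q, e)\<bar> \<le> sqrt (2 * mobility e q * M / dt)" by linarith
        also have "\<dots> \<le> (\<Sum>e\<in>set dirs. \<Sum>q\<in>inner_faces N e. sqrt (2 * mobility e q * M / dt))"
          using face face_sqrt_nonneg by (intro member_le_sum_sum) auto
        also have "\<dots> \<le> R" unfolding R_def using M alpha_pos by simp
        finally show ?thesis using face by simp
      next
        case cell
        have "(z (p, origin))\<^sup>2 \<le> 8 * M / \<alpha>"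
          using phi[OF cell(1)] alpha_pos by (simp add: phi_of_def field_simps)
        then have "\<bar>z (p, origin)\<bar> \<le> sqrt (8 * M / \<alpha>)" by (metis real_sqrt_abs real_sqrt_le_mono)
        also have "\<dots> \<le> R" unfolding R_def using face_sqrt_nonneg by (simp add: sum_nonneg)
        finally show ?thesis using cell by simp
      qed
    qed
  qed
  ultimately show ?thesis by blast
qed

lemma continuous_on_density [continuous_intros]: "continuous_on S (\<lambda>z. density z p)"
  unfolding density_def div_flux_def flux_of_def using h_pos by (intro continuous_intros) auto

lemma continuous_on_energy:
  assumes "\<forall>z\<in>S. \<forall>p\<in>cells N. density z p > 0"
  shows "continuous_on S energy"
proof -
  have "continuous_on S dissipation"
    unfolding dissipation_def using mobility_pos
    by (intro continuous_intros) (auto simp: less_imp_neq[symmetric])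
  moreover have "continuous_on S dirichlet_energy"
    unfolding dirichlet_energy_def diff_quot_def phi_of_def using h_pos
    by (intro continuous_intros) auto
  moreover have "continuous_on S (\<lambda>z. \<Sum>p\<in>cells N. cell_energy p (density z p) (phi_of z p))"
    unfolding cell_energy_def phi_of_def using assms
    by (intro continuous_on_sum continuous_on_add continuous_on_diff continuous_on_mult continuous_on_const
        continuous_on_power continuous_on_G_half continuous_on_density continuous_on_coordinate) auto
  ultimately show ?thesis
    unfolding energy_def[abs_def] by (intro continuous_on_add) auto
qed

lemma admissible_zero: "admissible (\<lambda>_. 0)"
proof -
  have "flux_of (\<lambda>_. 0) = (\<lambda>q e. 0)" by (simp add: fun_eq_iff flux_of_def)
  then show ?thesis using rho_pos by (simp add: admissible_def density_def div_flux_zero)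
qed

lemma energy_has_minimiser:
  obtains m where "admissible m" and "\<And>z. admissible z \<Longrightarrow> energy m \<le> energy z"
proof -
  obtain R \<delta> where \<delta>: "\<delta> > 0" and bounded': "\<forall>z. admissible z \<and> energy z \<le> energy (\<lambda>_. 0) \<longrightarrow>
      (\<forall>i\<in>coords. \<bar>z i\<bar> \<le> R) \<and> (\<forall>p\<in>cells N. \<delta> \<le> density z p)"
    using energy_sublevel_bounded by blast
  have bounded: "(\<forall>i\<in>coords. \<bar>z i\<bar> \<le> R) \<and> (\<forall>p\<in>cells N. \<delta> \<le> density z p)"
    if "admissible z" "energy z \<le> energy (\<lambda>_. 0)" for z
    using bounded' that by blast
  obtain p where "p \<in> cells N" using cells_nonempty[OF N_pos] by blast
  then have "(p, origin) \<in> coords" by (auto simp: coords_def)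
  then have R: "R \<ge> 0" using bounded[OF admissible_zero order_refl] by (metis abs_ge_zero order_trans)
  define K where "K = Pi UNIV (\<lambda>_. {-R..R}) \<inter> (\<Inter>i\<in>-coords. {z. z i = 0})
      \<inter> (\<Inter>p\<in>cells N. {z. \<delta> \<le> density z p})"
  have "compact (Pi UNIV (\<lambda>_::idx \<times> idx. {-R..R::real}))"
    using compactin_PiE[of "\<lambda>_. euclidean" UNIV "\<lambda>_::idx \<times> idx. {-R..R::real}"]
    by (simp add: euclidean_product_topology PiE_UNIV_domain)
  moreover have "closed (\<Inter>i\<in>-coords. {z :: idx \<times> idx \<Rightarrow> real. z i = 0})"
    by (intro closed_INT ballI closed_Collect_eq continuous_intros)
  moreover have "closed (\<Inter>p\<in>cells N. {z. \<delta> \<le> density z p})"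
    by (intro closed_INT ballI closed_Collect_le continuous_intros)
  ultimately have "compact K" unfolding K_def by blast
  have K_pos: "\<forall>z\<in>K. \<forall>p\<in>cells N. density z p > 0"
  proof (intro ballI)
    fix z p assume "z \<in> K" "p \<in> cells N"
    then have "\<delta> \<le> density z p" unfolding K_def by blast
    with \<delta> show "density z p > 0" by linarith
  qed
  have K_admissible: "admissible z" if "z \<in> K" for z
  proof -
    have "z i = 0" if "i \<notin> coords" for i using \<open>z \<in> K\<close> that unfolding K_def by blast
    then show ?thesis using K_pos \<open>z \<in> K\<close> unfolding admissible_def by blast
  qed
  have sublevel_in_K: "z \<in> K" if adm: "admissible z" and sub: "energy z \<le> energy (\<lambda>_. 0)" for z
  proof -
    have "z \<in> Pi UNIV (\<lambda>_. {-R..R})"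
    proof
      fix i
      have "z i = 0" if "i \<notin> coords" using adm that unfolding admissible_def by blast
      then show "z i \<in> {-R..R}"
        using bounded[OF adm sub] R by (cases "i \<in> coords") (auto simp: abs_le_iff)
    qed
    then show ?thesis using bounded[OF adm sub] adm unfolding K_def admissible_def by blast
  qed
  have "(\<lambda>_. 0) \<in> K" using sublevel_in_K[OF admissible_zero order_refl] .
  then obtain m where m: "m \<in> K" and min: "\<And>z. z \<in> K \<Longrightarrow> energy m \<le> energy z"
    using continuous_attains_inf[OF \<open>compact K\<close> _ continuous_on_energy[OF K_pos]] by blast
  show ?thesis
  proof
    show "admissible m" using K_admissible[OF m] .
    fix z assume z: "admissible z"
    show "energy m \<le> energy z"
    proof (cases "energy z \<le> energy (\<lambda>_. 0)")
      case True then show ?thesis using min[OF sublevel_in_K[OF z]] by simp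
    next
      case False then show ?thesis using min[OF \<open>(\<lambda>_. 0) \<in> K\<close>] by linarith
    qed
  qed
qed

lemma minimiser_critical:
  assumes adm: "admissible m" and min: "\<And>z. admissible z \<Longrightarrow> energy m \<le> energy z"
    and i: "i \<in> coords"
  shows "energy_deriv m (unit_coord i) = 0"
proof -
  define c where "c p = dt * div_flux h N (flux_of (unit_coord i)) p" for p
  define \<delta> where "\<delta> = Min (density m ` cells N)"
  define bnd where "bnd = (\<Sum>p\<in>cells N. \<bar>c p\<bar>) + 1"
  have pos: "\<forall>p\<in>cells N. density m p > 0" using adm by (simp add: admissible_def)
  have \<delta>: "\<delta> > 0" "\<And>p. p \<in> cells N \<Longrightarrow> \<delta> \<le> density m p"
    unfolding \<delta>_def using pos cells_nonempty[OF N_pos] by (auto simp: Min_gr_iff)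
  have bnd: "bnd > 0" "\<And>p. p \<in> cells N \<Longrightarrow> \<bar>c p\<bar> \<le> bnd"
    unfolding bnd_def by (auto simp: add_nonneg_pos sum_nonneg intro!: add_increasing2 member_le_sum)
  show ?thesis
  proof (rule DERIV_local_min[OF energy_has_derivative[OF pos], of "\<delta> / bnd"])
    show "0 < \<delta> / bnd" using \<delta> bnd by simp
    show "\<forall>t. \<bar>0 - t\<bar> < \<delta> / bnd \<longrightarrow> energy (\<lambda>j. m j + 0 * unit_coord i j) \<le> energy (\<lambda>j. m j + t * unit_coord i j)"
    proof (intro allI impI)
      fix t :: real assume t: "\<bar>0 - t\<bar> < \<delta> / bnd"
      have "density m p + t * c p > 0" if p: "p \<in> cells N" for p
      proof -
        have "\<bar>t * c p\<bar> \<le> \<bar>t\<bar> * bnd" using bnd(2)[OF p] by (simp add: abs_mult mult_left_mono)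
        also have "\<dots> < \<delta>" using t bnd by (simp add: pos_less_divide_eq)
        finally show ?thesis using \<delta>(2)[OF p] by linarith
      qed
      then have "admissible (\<lambda>j. m j + t * unit_coord i j)"
        using adm i by (auto simp: admissible_def unit_coord_def density_add_scaled c_def)
      then show "energy (\<lambda>j. m j + 0 * unit_coord i j) \<le> energy (\<lambda>j. m j + t * unit_coord i j)"
        using min by simp
    qed
  qed
qed

lemma critical_point_solves:
  assumes adm: "admissible m" and crit: "\<And>i. i \<in> coords \<Longrightarrow> energy_deriv m (unit_coord i) = 0"
  defines "rn \<equiv> \<lambda>p. if p \<in> cells N then density m p else 0"
    and "fn \<equiv> \<lambda>p. if p \<in> cells N then phi_of m p else 0"
  shows "scheme_eqs rn fn"
  unfolding scheme_eqs_def
proof (intro ballI conjI)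
  fix p assume p: "p \<in> cells N"
  define W where "W = (\<lambda>p. cell_energy_dx p (density m p) (phi_of m p))"
  have flux: "flux_of m q e = mobility_flux (potential rn fn) q e"
    if e: "e \<in> set dirs" and q: "q \<in> inner_faces N e" for e q
  proof -
    have "(q, e) \<in> coords" unfolding coords_def using e q by blast
    then have "dt * m (q, e) / mobility e q - dt * diff_quot h W q e = 0"
      using crit energy_deriv_unit_flux[OF e q, of m] by (simp add: W_def)
    then have "m (q, e) = mobility e q * diff_quot h W q e"
      using dt_pos mobility_pos[of e q] by (simp add: field_simps)
    moreover have "W p' = potential rn fn p'" if "p' \<in> cells N" for p'
      using that by (simp add: W_def potential_def cell_energy_dx_def rn_def fn_def)
    moreover have "q \<in> cells N" "padd q e \<in> cells N" using q by (auto simp: inner_faces_def)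
    ultimately show ?thesis by (simp add: flux_of_def mobility_flux_def diff_quot_def)
  qed
  show "(rn p - rho p) / dt = div_flux h N (mobility_flux (potential rn fn)) p"
    using p dt_pos div_flux_cong[of N "flux_of m" "mobility_flux (potential rn fn)", OF flux]
    by (simp add: rn_def density_def)
  define k where "k = \<theta> / dt"
  have "(p, origin) \<in> coords" unfolding coords_def using p by blast
  then have "cell_energy_dy p (density m p) (phi_of m p) = \<mu>/2 * div_flux h N (diff_quot h (phi_of m)) p"
    using crit energy_deriv_unit_phi[OF p, of m] by simp
  then have "(k + \<alpha>/2) * phi_of m p - ((k - \<alpha>/2) * phi p + \<mu>/2 * lap_h h N phi p + \<chi>/2 * rho p)
      - \<chi>/2 * density m p = \<mu>/2 * div_flux h N (diff_quot h (phi_of m)) p"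
    by (simp add: cell_energy_dy_def phi_coef_def phi_rhs_def k_def)
  moreover have "div_flux h N (diff_quot h fn) p = div_flux h N (diff_quot h (phi_of m)) p"
    by (rule div_flux_cong) (auto simp: diff_quot_def fn_def inner_faces_def)
  moreover have "\<theta> * (fn p - phi p) / dt = k * phi_of m p - k * phi p"
    using p by (simp add: k_def fn_def diff_divide_distrib right_diff_distrib)
  ultimately show "\<theta> * (fn p - phi p) / dt = \<mu> / 2 * (div_flux h N (diff_quot h fn) p + lap_h h N phi p)
      - \<alpha> / 2 * (fn p + phi p) + \<chi> / 2 * (rn p + rho p)"
    using p by (simp add: rn_def fn_def algebra_simps)
qed

lemma scheme_eqs_solvable:
  "\<exists>rn fn. rn \<in> gridC N \<and> fn \<in> gridC N \<and> (\<forall>p\<in>cells N. rn p > 0) \<and> scheme_eqs rn fn"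
proof -
  obtain m where adm: "admissible m" and min: "\<And>z. admissible z \<Longrightarrow> energy m \<le> energy z"
    using energy_has_minimiser by blast
  let ?rn = "\<lambda>p. if p \<in> cells N then density m p else 0"
  let ?fn = "\<lambda>p. if p \<in> cells N then phi_of m p else 0"
  have "scheme_eqs ?rn ?fn"
    using critical_point_solves[OF adm minimiser_critical[OF adm min]] by blast
  moreover have "\<forall>p\<in>cells N. ?rn p > 0" using adm by (simp add: admissible_def)
  ultimately show ?thesis by (intro exI[of _ ?rn] exI[of _ ?fn]) (simp add: gridC_def)
qed

end

theorem mainTheorem3:
  fixes a b :: real and N :: nat
    and \<gamma> \<mu> \<alpha> \<chi> \<theta> dt :: real
    and rho_old rho phi :: "idx \<Rightarrow> real"
  assumes "a < b" and "N \<ge> 1"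
    and "\<gamma> > 0" "\<mu> > 0" "\<alpha> > 0" "\<chi> > 0" "\<theta> > 0" "dt > 0"
    and "rho_old \<in> gridC N" "rho \<in> gridC N" "phi \<in> gridC N"
    and "\<forall>p \<in> cells N. rho p > 0"
  shows "\<exists>!(rho_new, phi_new).
           rho_new \<in> gridC N \<and> phi_new \<in> gridC N \<and>
           (\<forall>p \<in> cells N. rho_new p > 0) \<and>
           scheme a b N \<gamma> \<mu> \<alpha> \<chi> \<theta> dt rho_old rho phi rho_new phi_new"
    (is "\<exists>!x. ?solution x")
proof -
  interpret scheme_step N "(b - a) / real N" dt \<gamma> \<mu> \<alpha> \<chi> \<theta> rho_old rho phi
  proof
    show "(b - a) / real N > 0" using assms(1,2) by simp
  qed (use assms in auto)
  have iff: "scheme a b N \<gamma> \<mu> \<alpha> \<chi> \<theta> dt rho_old rho phi rn fn \<longleftrightarrow> scheme_eqs rn fn" for rn fn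
    by (rule scheme_iff_scheme_eqs) simp
  obtain rn fn where sol: "rn \<in> gridC N" "fn \<in> gridC N" "\<forall>p\<in>cells N. rn p > 0" "scheme_eqs rn fn"
    using scheme_eqs_solvable by blast
  have "?solution (rn, fn)" using sol iff by simp
  moreover have "x = (rn, fn)" if "?solution x" for x
  proof (cases x)
    case (Pair rn' fn')
    then show ?thesis using that sol scheme_eqs_unique[of rn' fn' rn fn] by (simp add: iff)
  qed
  ultimately show ?thesis by (rule ex1I)
qed

end
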